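(* Let $R$ be a commutative ring with $1\neq 0$, $S\subseteq R$ a multiplicatively closed subset, and $M$ a finitely generated faithful multiplication $R$-module. Then $\mathrm{rad}^{S}(M)=\mathrm{rad}^{S}(R)\,M$, where $\mathrm{rad}^{S}(M)$ denotes the intersection of all $S$-prime submodules of $M$ and $\mathrm{rad}^{S}(R)$ the intersection of all $S$-prime ideals of $R$.
   Context: All rings are commutative with $1\neq 0$ and all modules are unital. A multiplicatively closed subset (m.c.s.) $S$ of $R$ is a subset with $0\notin S$, $1\in S$, and $ss'\in S$ for all $s,s'\in S$. $M$ is a multiplication module if every submodule of $M$ equals $JM$ for some ideal $J$; faithful means $\mathrm{Ann}_R(M)=0$. $(L:_R M)=\{r\in R: rM\subseteq L\}$. A submodule $P$ of $M$ with $(P:_R M)\cap S=\emptyset$ is $S$-prime if there exists $s\in S$ such that whenever $am\in P$ ($a\in R$, $m\in M$), then $sa\in(P:_R M)$ or $sm\in P$; $S$-prime ideals are $S$-prime submodules of the $R$-module $R$. An empty intersection of submodules of $M$ is taken to be $M$. *)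

theory Defs
  imports Main "HOL.Modules"
begin

text \<open>Rings are types of class comm_ring_1 (so 1 is not 0); an R-module M is the
  whole carrier of a type 'b of class ab_group_add together with a scalar
  multiplication scale satisfying the locale module.\<close>

definition mcs :: "'a::comm_ring_1 set \<Rightarrow> bool" where
  "mcs S \<longleftrightarrow> 0 \<notin> S \<and> 1 \<in> S \<and> (\<forall>s\<in>S. \<forall>t\<in>S. s * t \<in> S)"

definition colon :: "('a::comm_ring_1 \<Rightarrow> 'b::ab_group_add \<Rightarrow> 'b) \<Rightarrow> 'b set \<Rightarrow> 'a set" where
  "colon scale L = {r. \<forall>m. scale r m \<in> L}"

definition ideal_smult :: "('a::comm_ring_1 \<Rightarrow> 'b::ab_group_add \<Rightarrow> 'b) \<Rightarrow> 'a set \<Rightarrow> 'b set" where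
  "ideal_smult scale J = module.span scale {scale r m | r m. r \<in> J}"

definition is_ideal :: "'a::comm_ring_1 set \<Rightarrow> bool" where
  "is_ideal J \<longleftrightarrow> module.subspace ((*) :: 'a \<Rightarrow> 'a \<Rightarrow> 'a) J"

definition multiplication_module :: "('a::comm_ring_1 \<Rightarrow> 'b::ab_group_add \<Rightarrow> 'b) \<Rightarrow> bool" where
  "multiplication_module scale \<longleftrightarrow>
     (\<forall>N. module.subspace scale N \<longrightarrow> (\<exists>J. is_ideal J \<and> N = ideal_smult scale J))"

definition faithful :: "('a::comm_ring_1 \<Rightarrow> 'b::ab_group_add \<Rightarrow> 'b) \<Rightarrow> bool" where
  "faithful scale \<longleftrightarrow> colon scale {0} = {0}"

definition finitely_generated :: "('a::comm_ring_1 \<Rightarrow> 'b::ab_group_add \<Rightarrow> 'b) \<Rightarrow> bool" where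
  "finitely_generated scale \<longleftrightarrow> (\<exists>F. finite F \<and> module.span scale F = UNIV)"

definition S_prime :: "('a::comm_ring_1 \<Rightarrow> 'b::ab_group_add \<Rightarrow> 'b) \<Rightarrow> 'a set \<Rightarrow> 'b set \<Rightarrow> bool" where
  "S_prime scale S P \<longleftrightarrow> module.subspace scale P \<and> colon scale P \<inter> S = {} \<and>
     (\<exists>s\<in>S. \<forall>a m. scale a m \<in> P \<longrightarrow> s * a \<in> colon scale P \<or> scale s m \<in> P)"

definition radS :: "('a::comm_ring_1 \<Rightarrow> 'b::ab_group_add \<Rightarrow> 'b) \<Rightarrow> 'a set \<Rightarrow> 'b set" where
  "radS scale S = \<Inter> {P. S_prime scale S P}"

end

theory Submission
  imports Defs
begin

text \<open>For a finitely generated faithful multiplication module the maps \<open>N \<mapsto> (N :\<^sub>R M)\<close> and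
  \<open>J \<mapsto> J M\<close> are mutually inverse: every submodule \<open>N\<close> equals \<open>(N :\<^sub>R M) M\<close>, and \<open>(J M :\<^sub>R M) = J\<close>.
  The latter holds because \<open>\<theta>(M) M = M\<close> forces \<open>1 \<in> \<theta>(M)\<close> by Nakayama's lemma, while
  \<open>a\<^sup>2 r \<in> J\<close> for every \<open>a \<in> (R m :\<^sub>R M)\<close> and \<open>r \<in> (J M :\<^sub>R M)\<close>, so \<open>1\<close> lies in the radical of
  \<open>{t. t r \<in> J}\<close>. Both maps preserve \<open>S\<close>-primeness and \<open>(- :\<^sub>R M)\<close> commutes with
  intersections, hence \<open>(rad\<^sup>S(M) :\<^sub>R M) = rad\<^sup>S(R)\<close> and
  \<open>rad\<^sup>S(M) = (rad\<^sup>S(M) :\<^sub>R M) M = rad\<^sup>S(R) M\<close>.\<close>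

lemma module_times: "module ((*) :: 'a::comm_ring_1 \<Rightarrow> 'a \<Rightarrow> 'a)"
  by unfold_locales (auto simp: algebra_simps)

lemma is_idealI:
  "0 \<in> J \<Longrightarrow> (\<And>x y. x \<in> J \<Longrightarrow> y \<in> J \<Longrightarrow> x + y \<in> J) \<Longrightarrow> (\<And>c x. x \<in> J \<Longrightarrow> c * x \<in> J)
    \<Longrightarrow> is_ideal J"
  unfolding is_ideal_def by (rule module.subspaceI[OF module_times])

lemma
  assumes "is_ideal J"
  shows ideal_0: "0 \<in> J"
    and ideal_add: "x \<in> J \<Longrightarrow> y \<in> J \<Longrightarrow> x + y \<in> J"
    and ideal_mult_left: "x \<in> J \<Longrightarrow> c * x \<in> J"
    and ideal_mult_right: "x \<in> J \<Longrightarrow> x * c \<in> J"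
    and ideal_sum: "(\<And>i. i \<in> A \<Longrightarrow> f i \<in> J) \<Longrightarrow> sum f A \<in> J"
  using assms module.subspace_0[OF module_times] module.subspace_add[OF module_times]
    module.subspace_scale[OF module_times] module.subspace_sum[OF module_times]
  unfolding is_ideal_def by (metis mult.commute)+

lemma radical_is_ideal:
  assumes K: "is_ideal K"
  shows "is_ideal {x. \<exists>n. x ^ n \<in> K}"
proof (rule is_idealI)
  show "0 \<in> {x. \<exists>n. x ^ n \<in> K}" using ideal_0[OF K] by (auto intro!: exI[of _ 1])
next
  fix c x assume "x \<in> {x. \<exists>n. x ^ n \<in> K}"
  then obtain n where "x ^ n \<in> K" by auto
  then have "(c * x) ^ n \<in> K" using ideal_mult_left[OF K] by (simp add: power_mult_distrib)
  then show "c * x \<in> {x. \<exists>n. x ^ n \<in> K}" by auto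
next
  fix x y assume "x \<in> {x. \<exists>n. x ^ n \<in> K}" "y \<in> {x. \<exists>n. x ^ n \<in> K}"
  then obtain p q where p: "x ^ p \<in> K" and q: "y ^ q \<in> K" by auto
  have "of_nat (p + q choose k) * x ^ k * y ^ (p + q - k) \<in> K" for k
  proof (cases "p \<le> k")
    case True
    then have "x ^ k = x ^ p * x ^ (k - p)" by (simp flip: power_add)
    then show ?thesis by (metis K ideal_mult_left ideal_mult_right p mult.assoc)
  next
    case False
    then have "p + q - k = q + (p - k)" by arith
    then have "y ^ (p + q - k) = y ^ q * y ^ (p - k)" by (simp add: power_add)
    then show ?thesis by (metis K ideal_mult_left ideal_mult_right q mult.assoc)
  qed
  then have "(x + y) ^ (p + q) \<in> K" unfolding binomial_ring by (intro ideal_sum[OF K])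
  then show "x + y \<in> {x. \<exists>n. x ^ n \<in> K}" by auto
qed

lemma colon_times_ideal: "is_ideal Q \<Longrightarrow> colon (*) Q = Q"
  unfolding colon_def using ideal_mult_right[of Q] by (auto dest: spec[of _ 1])

lemma colon_Inter: "colon scale (\<Inter>A) = (\<Inter>N\<in>A. colon scale N)"
  unfolding colon_def by auto

lemma S_prime_times_iff:
  "S_prime (*) S Q \<longleftrightarrow> is_ideal Q \<and> Q \<inter> S = {} \<and>
     (\<exists>s\<in>S. \<forall>a b. a * b \<in> Q \<longrightarrow> s * a \<in> Q \<or> s * b \<in> Q)"
  unfolding S_prime_def is_ideal_def[symmetric] by (metis colon_times_ideal)

definition theta :: "('a::comm_ring_1 \<Rightarrow> 'b::ab_group_add \<Rightarrow> 'b) \<Rightarrow> 'a set" where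
  "theta scale = module.span (*) (\<Union>m. colon scale (module.span scale {m}))"

context module
begin

lemma subspace_ideal_smult: "subspace (ideal_smult scale J)"
  unfolding ideal_smult_def by simp

lemma scale_in_ideal_smult: "r \<in> J \<Longrightarrow> scale r m \<in> ideal_smult scale J"
  unfolding ideal_smult_def by (rule span_base) auto

lemma ideal_smult_mono: "J \<subseteq> J' \<Longrightarrow> ideal_smult scale J \<subseteq> ideal_smult scale J'"
  unfolding ideal_smult_def by (rule span_mono) auto

lemma ideal_smult_subset:
  "subspace N \<Longrightarrow> (\<And>r m. r \<in> J \<Longrightarrow> scale r m \<in> N) \<Longrightarrow> ideal_smult scale J \<subseteq> N"
  unfolding ideal_smult_def by (rule span_minimal) auto

lemma subspace_scale_preimage: "subspace N \<Longrightarrow> subspace {x. scale r x \<in> N}"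
proof (rule subspaceI)
  fix c x assume "subspace N" "x \<in> {x. scale r x \<in> N}"
  then show "scale c x \<in> {x. scale r x \<in> N}"
    using subspace_scale scale_left_commute by fastforce
qed (auto simp: scale_right_distrib subspace_0 subspace_add)

lemma subspace_ideal_scale_vector:
  assumes J: "is_ideal J"
  shows "subspace {scale j m | j. j \<in> J}"
proof (rule subspaceI)
  show "0 \<in> {scale j m | j. j \<in> J}"
    using ideal_0[OF J] by force
  show "x + y \<in> {scale j m | j. j \<in> J}" if "x \<in> {scale j m | j. j \<in> J}"
    and "y \<in> {scale j m | j. j \<in> J}" for x y
    using that ideal_add[OF J] by (force simp flip: scale_left_distrib)
  show "scale c x \<in> {scale j m | j. j \<in> J}" if "x \<in> {scale j m | j. j \<in> J}" for c x
    using that ideal_mult_left[OF J] by force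
qed

lemma is_ideal_colon: "subspace N \<Longrightarrow> is_ideal (colon scale N)"
  unfolding colon_def
  by (rule is_idealI) (auto simp: subspace_0 subspace_add subspace_scale scale_left_distrib
      simp flip: scale_scale)

lemma multiplication_module_colon:
  assumes "multiplication_module scale" and N: "subspace N"
  shows "ideal_smult scale (colon scale N) = N"
proof
  show "ideal_smult scale (colon scale N) \<subseteq> N"
    by (rule ideal_smult_subset[OF N]) (auto simp: colon_def)
  obtain J where "N = ideal_smult scale J"
    using assms unfolding multiplication_module_def by blast
  moreover have "J \<subseteq> colon scale N"
    unfolding colon_def \<open>N = ideal_smult scale J\<close> using scale_in_ideal_smult by auto
  ultimately show "N \<subseteq> ideal_smult scale (colon scale N)"
    using ideal_smult_mono by auto
qed

lemma subspace_ideal_combinations: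
  assumes I: "is_ideal I"
  shows "subspace {\<Sum>h\<in>F. scale (c h) h | c. \<forall>h\<in>F. c h \<in> I}"
proof (rule subspaceI)
  show "0 \<in> {\<Sum>h\<in>F. scale (c h) h | c. \<forall>h\<in>F. c h \<in> I}"
    using ideal_0[OF I] by (auto intro!: exI[of _ "\<lambda>_. 0"])
  show "x + y \<in> {\<Sum>h\<in>F. scale (c h) h | c. \<forall>h\<in>F. c h \<in> I}"
    if xy: "x \<in> {\<Sum>h\<in>F. scale (c h) h | c. \<forall>h\<in>F. c h \<in> I}"
      "y \<in> {\<Sum>h\<in>F. scale (c h) h | c. \<forall>h\<in>F. c h \<in> I}" for x y
  proof -
    obtain c d where "x = (\<Sum>h\<in>F. scale (c h) h)" "y = (\<Sum>h\<in>F. scale (d h) h)"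
      and "\<forall>h\<in>F. c h \<in> I" "\<forall>h\<in>F. d h \<in> I"
      using xy by blast
    then show ?thesis using ideal_add[OF I]
      by (intro CollectI exI[of _ "\<lambda>h. c h + d h"]) (simp add: scale_left_distrib sum.distrib)
  qed
  show "scale a x \<in> {\<Sum>h\<in>F. scale (c h) h | c. \<forall>h\<in>F. c h \<in> I}"
    if x: "x \<in> {\<Sum>h\<in>F. scale (c h) h | c. \<forall>h\<in>F. c h \<in> I}" for a x
  proof -
    obtain c where "x = (\<Sum>h\<in>F. scale (c h) h)" "\<forall>h\<in>F. c h \<in> I"
      using x by blast
    then show ?thesis using ideal_mult_left[OF I]
      by (intro CollectI exI[of _ "\<lambda>h. a * c h"]) (simp add: scale_sum_right)
  qed
qed

lemma ideal_smult_subset_combinations: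
  assumes I: "is_ideal I" and F: "finite F" "span F = UNIV"
  shows "ideal_smult scale I \<subseteq> {\<Sum>h\<in>F. scale (c h) h | c. \<forall>h\<in>F. c h \<in> I}"
proof (rule ideal_smult_subset[OF subspace_ideal_combinations[OF I]])
  fix r m assume r: "r \<in> I"
  obtain u where "m = (\<Sum>h\<in>F. scale (u h) h)"
    using F span_finite[of F] by auto
  then have "scale r m = (\<Sum>h\<in>F. scale (r * u h) h)"
    by (simp add: scale_sum_right)
  then show "scale r m \<in> {\<Sum>h\<in>F. scale (c h) h | c. \<forall>h\<in>F. c h \<in> I}"
    using ideal_mult_right[OF I r] by (intro CollectI exI[of _ "\<lambda>h. r * u h"]) simp
qed

lemma nakayama_insert:
  assumes I: "is_ideal I" and N: "subspace N"
    and b: "b \<in> I" and k: "\<forall>g\<in>F. scale (1 - b) g - scale (k g) f \<in> N"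
    and d: "1 - d \<in> I" and df: "scale d f \<in> N"
  shows "\<exists>e\<in>I. \<forall>g\<in>insert f F. scale (1 - e) g \<in> N"
proof (intro bexI ballI)
  show "1 - d * (1 - b) \<in> I"
    using ideal_add[OF I d ideal_mult_left[OF I b, of d]] by (simp add: algebra_simps)
  fix g assume "g \<in> insert f F"
  then show "scale (1 - (1 - d * (1 - b))) g \<in> N"
  proof
    assume "g = f"
    then show ?thesis using subspace_scale[OF N df, of "1 - b"] by (simp add: mult.commute)
  next
    assume "g \<in> F"
    then have "scale d (scale (1 - b) g - scale (k g) f) + scale (k g) (scale d f) \<in> N"
      using k df subspace_add[OF N] subspace_scale[OF N] by blast
    then show ?thesis by (simp add: scale_right_diff_distrib mult.commute)
  qed
qed

text \<open>Nakayama's lemma relative to a submodule \<open>N\<close>, which replaces the quotient \<open>M/N\<close>: the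
  induction on the generators passes from \<open>N\<close> to \<open>N + R f\<close>.\<close>

lemma nakayama_combinations:
  assumes I: "is_ideal I" and F: "finite F"
  shows "subspace N \<Longrightarrow> \<forall>g\<in>F. \<exists>c. (\<forall>h\<in>F. c h \<in> I) \<and> g - (\<Sum>h\<in>F. scale (c h) h) \<in> N
    \<Longrightarrow> \<exists>a\<in>I. \<forall>g\<in>F. scale (1 - a) g \<in> N"
  using F
proof (induction F arbitrary: N)
  case empty
  then show ?case using ideal_0[OF I] by blast
next
  case (insert f F N)
  note N = insert.prems(1) and combinations = insert.prems(2)
  define N' where "N' = span (insert f N)"
  have N'_iff: "x \<in> N' \<longleftrightarrow> (\<exists>k. x - scale k f \<in> N)" for x
    unfolding N'_def span_insert span_eq_iff[THEN iffD2, OF N] by simp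
  have "\<forall>g\<in>F. \<exists>c. (\<forall>h\<in>F. c h \<in> I) \<and> g - (\<Sum>h\<in>F. scale (c h) h) \<in> N'"
  proof
    fix g assume "g \<in> F"
    then obtain c where c: "\<forall>h\<in>insert f F. c h \<in> I"
      and "g - (\<Sum>h\<in>insert f F. scale (c h) h) \<in> N"
      using combinations by blast
    then have "(g - (\<Sum>h\<in>F. scale (c h) h)) - scale (c f) f \<in> N"
      using insert.hyps by (simp add: algebra_simps)
    then show "\<exists>c. (\<forall>h\<in>F. c h \<in> I) \<and> g - (\<Sum>h\<in>F. scale (c h) h) \<in> N'"
      using c N'_iff by blast
  qed
  then obtain b where b: "b \<in> I" and "\<forall>g\<in>F. scale (1 - b) g \<in> N'"
    using insert.IH[of N'] unfolding N'_def by blast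
  then have "\<forall>g\<in>F. \<exists>k. scale (1 - b) g - scale k f \<in> N"
    using N'_iff by blast
  then obtain k where k: "\<forall>g\<in>F. scale (1 - b) g - scale (k g) f \<in> N"
    by (metis bchoice)
  obtain c where c: "\<forall>h\<in>insert f F. c h \<in> I"
    and cf: "f - (\<Sum>h\<in>insert f F. scale (c h) h) \<in> N"
    using combinations by blast
  define d where "d = (1 - b) * (1 - c f) - (\<Sum>h\<in>F. c h * k h)"
  have "scale d f = scale (1 - b) (f - (\<Sum>h\<in>insert f F. scale (c h) h))
      + (\<Sum>h\<in>F. scale (c h) (scale (1 - b) h - scale (k h) f))"
    using insert.hyps
    by (simp add: d_def algebra_simps scale_sum_right scale_sum_left sum_subtractf sum.distrib)
  also have "\<dots> \<in> N"
    using c cf k N by (intro subspace_add subspace_scale subspace_sum) auto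
  finally have "scale d f \<in> N" .
  moreover have "1 - d = b + c f * (1 - b) + (\<Sum>h\<in>F. c h * k h)"
    by (simp add: d_def algebra_simps)
  then have "1 - d \<in> I"
    using b c by (auto intro!: ideal_add ideal_mult_right ideal_sum I)
  ultimately show ?case
    using nakayama_insert[OF I N b k] by blast
qed

lemma faithful_one_mem_if_ideal_smult_UNIV:
  assumes fg: "finitely_generated scale" and fa: "faithful scale"
    and I: "is_ideal I" and IM: "ideal_smult scale I = UNIV"
  shows "1 \<in> I"
proof -
  obtain F where F: "finite F" "span F = UNIV"
    using fg unfolding finitely_generated_def by blast
  have "\<forall>g\<in>F. \<exists>c. (\<forall>h\<in>F. c h \<in> I) \<and> g - (\<Sum>h\<in>F. scale (c h) h) \<in> {0}"
    using ideal_smult_subset_combinations[OF I F] IM by fastforce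
  then obtain a where a: "a \<in> I" "\<forall>g\<in>F. scale (1 - a) g \<in> {0}"
    using nakayama_combinations[OF I F(1) subspace_single_0] by blast
  have "span F \<subseteq> {x. scale (1 - a) x \<in> {0}}"
    using a(2) by (intro span_minimal subspace_scale_preimage) auto
  then have "1 - a \<in> colon scale {0}"
    using F(2) by (auto simp: colon_def)
  then have "1 - a = 0"
    using fa by (simp add: faithful_def)
  then show ?thesis using a(1) by simp
qed

lemma square_mult_mem_ideal:
  assumes fa: "faithful scale" and J: "is_ideal J"
    and a: "a \<in> colon scale (span {m})" and r: "r \<in> colon scale (ideal_smult scale J)"
  shows "a * a * r \<in> J"
proof -
  have "ideal_smult scale J \<subseteq> {z. scale a z \<in> {scale j m | j. j \<in> J}}"
  proof (rule ideal_smult_subset[OF subspace_scale_preimage[OF subspace_ideal_scale_vector[OF J]]])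
    fix j y assume "j \<in> J"
    obtain k where "scale a y = scale k m"
      using a unfolding colon_def span_singleton by blast
    then have "scale a (scale j y) = scale (j * k) m"
      by (metis scale_left_commute scale_scale)
    then show "scale j y \<in> {z. scale a z \<in> {scale j m | j. j \<in> J}}"
      using ideal_mult_right[OF J \<open>j \<in> J\<close>] by blast
  qed
  then obtain j where j: "j \<in> J" "scale a (scale r m) = scale j m"
    using r unfolding colon_def by blast
  have "scale ((a * r - j) * a) x = 0" for x
  proof -
    obtain k where k: "scale a x = scale k m"
      using a unfolding colon_def span_singleton by blast
    have "scale ((a * r - j) * a) x = scale (a * r - j) (scale k m)"
      by (simp flip: k)
    also have "\<dots> = scale k (scale (a * r - j) m)"
      by (rule scale_left_commute)
    also have "scale (a * r - j) m = 0"
      using j(2) by (simp add: scale_left_diff_distrib)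
    finally show ?thesis by simp
  qed
  then have "(a * r - j) * a = 0"
    using fa unfolding faithful_def colon_def by auto
  then have "a * a * r = j * a"
    by (simp add: algebra_simps)
  then show ?thesis using ideal_mult_right[OF J j(1)] by simp
qed

lemma is_ideal_theta: "is_ideal (theta scale)"
  unfolding is_ideal_def theta_def by (rule module.subspace_span[OF module_times])

lemma ideal_smult_theta:
  assumes "multiplication_module scale"
  shows "ideal_smult scale (theta scale) = UNIV"
proof -
  have "x \<in> ideal_smult scale (theta scale)" for x
  proof -
    have "x \<in> span {x}" by (simp add: span_base)
    also have "span {x} = ideal_smult scale (colon scale (span {x}))"
      using multiplication_module_colon[OF assms subspace_span] by simp
    also have "\<dots> \<subseteq> ideal_smult scale (theta scale)"
      unfolding theta_def by (intro ideal_smult_mono) (auto intro: module.span_base[OF module_times])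
    finally show ?thesis .
  qed
  then show ?thesis by auto
qed

lemma theta_subset_radical:
  assumes fa: "faithful scale" and J: "is_ideal J"
    and r: "r \<in> colon scale (ideal_smult scale J)"
  shows "theta scale \<subseteq> {x. \<exists>n. x ^ n * r \<in> J}"
proof -
  have K: "is_ideal {t. t * r \<in> J}"
    using J by (intro is_idealI) (auto simp: distrib_right mult.assoc ideal_0 ideal_add ideal_mult_left)
  show ?thesis
    unfolding theta_def
  proof (rule module.span_minimal[OF module_times])
    show "(\<Union>m. colon scale (span {m})) \<subseteq> {x. \<exists>n. x ^ n * r \<in> J}"
      using square_mult_mem_ideal[OF fa J _ r] by (auto intro!: exI[of _ 2] simp: power2_eq_square)
    show "module.subspace (*) {x. \<exists>n. x ^ n * r \<in> J}"
      using radical_is_ideal[OF K] unfolding is_ideal_def by simp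
  qed
qed

lemma colon_ideal_smult:
  assumes fg: "finitely_generated scale" and fa: "faithful scale"
    and mm: "multiplication_module scale" and J: "is_ideal J"
  shows "colon scale (ideal_smult scale J) = J"
proof
  show "J \<subseteq> colon scale (ideal_smult scale J)"
    using scale_in_ideal_smult by (auto simp: colon_def)
  show "colon scale (ideal_smult scale J) \<subseteq> J"
  proof
    fix r assume "r \<in> colon scale (ideal_smult scale J)"
    moreover have "1 \<in> theta scale"
      using faithful_one_mem_if_ideal_smult_UNIV[OF fg fa is_ideal_theta ideal_smult_theta[OF mm]] .
    ultimately show "r \<in> J"
      using theta_subset_radical[OF fa J] by fastforce
  qed
qed

lemma S_prime_colon:
  assumes "S_prime scale S P"
  shows "S_prime (*) S (colon scale P)"
proof -
  obtain s where P: "subspace P" and PS: "colon scale P \<inter> S = {}" and s: "s \<in> S"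
    and prime: "\<And>a m. scale a m \<in> P \<Longrightarrow> s * a \<in> colon scale P \<or> scale s m \<in> P"
    using assms unfolding S_prime_def by blast
  have "s * b \<in> colon scale P"
    if ab: "a * b \<in> colon scale P" and sa: "s * a \<notin> colon scale P" for a b
  proof -
    have "scale s (scale b y) \<in> P" for y
    proof -
      have "scale a (scale b y) \<in> P"
        using ab unfolding colon_def by simp
      then show ?thesis
        using prime sa by blast
    qed
    then show ?thesis
      unfolding colon_def by simp
  qed
  then show ?thesis
    unfolding S_prime_times_iff using is_ideal_colon[OF P] PS s by blast
qed

lemma S_prime_ideal_smult:
  assumes fg: "finitely_generated scale" and fa: "faithful scale"
    and mm: "multiplication_module scale" and "S_prime (*) S Q"
  shows "S_prime scale S (ideal_smult scale Q)"
proof -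
  obtain s where Q: "is_ideal Q" and QS: "Q \<inter> S = {}" and s: "s \<in> S"
    and prime: "\<And>a b. a * b \<in> Q \<Longrightarrow> s * a \<in> Q \<or> s * b \<in> Q"
    using assms(4) unfolding S_prime_times_iff by blast
  have colon_Q: "colon scale (ideal_smult scale Q) = Q"
    by (rule colon_ideal_smult[OF fg fa mm Q])
  have "scale s m \<in> ideal_smult scale Q"
    if am: "scale a m \<in> ideal_smult scale Q" and sa: "s * a \<notin> Q" for a m
  proof -
    have "ideal_smult scale (colon scale (span {m})) \<subseteq> {x. scale s x \<in> ideal_smult scale Q}"
    proof (rule ideal_smult_subset[OF subspace_scale_preimage[OF subspace_ideal_smult]])
      fix c y assume c: "c \<in> colon scale (span {m})"
      have "scale (a * c) x \<in> ideal_smult scale Q" for x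
      proof -
        obtain k where k: "scale c x = scale k m"
          using c unfolding colon_def span_singleton by blast
        have "scale (a * c) x = scale k (scale a m)"
          by (simp flip: scale_scale k add: scale_left_commute)
        then show ?thesis
          using subspace_scale[OF subspace_ideal_smult am] by simp
      qed
      then have "a * c \<in> Q"
        using colon_Q unfolding colon_def by auto
      then have "s * c \<in> Q"
        using prime sa by blast
      then show "scale c y \<in> {x. scale s x \<in> ideal_smult scale Q}"
        using scale_in_ideal_smult by simp
    qed
    moreover have "m \<in> ideal_smult scale (colon scale (span {m}))"
      using multiplication_module_colon[OF mm subspace_span] span_base[of m "{m}"] by simp
    ultimately show ?thesis by blast
  qed
  then show ?thesis
    unfolding S_prime_def using subspace_ideal_smult colon_Q QS s by auto
qed

lemma colon_radS:
  assumes fg: "finitely_generated scale" and fa: "faithful scale"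
    and mm: "multiplication_module scale"
  shows "colon scale (radS scale S) = radS (*) S"
proof (rule antisym)
  show "colon scale (radS scale S) \<subseteq> radS (*) S"
    unfolding radS_def colon_Inter
  proof (rule Inter_greatest)
    fix Q assume "Q \<in> {Q. S_prime (*) S Q}"
    then have "S_prime scale S (ideal_smult scale Q)" and "is_ideal Q"
      using S_prime_ideal_smult[OF fg fa mm] S_prime_times_iff by auto
    then show "(\<Inter>P\<in>{P. S_prime scale S P}. colon scale P) \<subseteq> Q"
      using colon_ideal_smult[OF fg fa mm] by blast
  qed
  show "radS (*) S \<subseteq> colon scale (radS scale S)"
    unfolding radS_def colon_Inter using S_prime_colon by blast
qed

end

theorem theorem3p6:
  fixes scale :: "'a::comm_ring_1 \<Rightarrow> 'b::ab_group_add \<Rightarrow> 'b"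
    and S :: "'a set"
  assumes "module scale"
    and "mcs S"
    and "finitely_generated scale"
    and "faithful scale"
    and "multiplication_module scale"
  shows "radS scale S = ideal_smult scale (radS ((*) :: 'a \<Rightarrow> 'a \<Rightarrow> 'a) S)"
proof -
  interpret module scale by fact
  have "subspace (radS scale S)"
    unfolding radS_def S_prime_def by (rule subspace_Inter) blast
  then have "radS scale S = ideal_smult scale (colon scale (radS scale S))"
    using multiplication_module_colon[OF assms(5)] by simp
  also have "\<dots> = ideal_smult scale (radS (*) S)"
    using colon_radS[OF assms(3-5)] by simp
  finally show ?thesis .
qed

end
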